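(* Let $G=\bigoplus_{i=1}^k\mathbb Z/p^{r_i}\mathbb Z$ and $a\in\mathcal F(G,K)$. Then $\mathrm{CharPoly}_{a,G}=(x-|a|)^{|G|}$. In particular, there exists a nonzero $a$-harmonic function on $G$ if and only if the constant function $1$ on $G$ is $a$-harmonic, if and only if $|a|=0$.
   Context: $K$ is a field of characteristic $p$. $\mathcal F(G,K)$ is the space of functions $G\to K$, $(f*a)(g)=\sum_hf(h)a(g-h)$, $\Delta_af=f*a$; $\mathrm{CharPoly}_{a,G}$ is the monic characteristic polynomial of $\Delta_a$ on $\mathcal F(G,K)$; $f$ is $a$-harmonic if $f*a=0$; $|a|=\sum_{u\in G}a(u)$. *)

theory Defs
  imports "Jordan_Normal_Form.Char_Poly"
begin

text \<open>The group G = (Z/p^{r_1}) + ... + (Z/p^{r_k}), realised concretely as functions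
  g :: nat => nat with 0 <= g i < p^(r i) for i < k and g i = 0 for i >= k.\<close>

definition cyc_grp :: "nat \<Rightarrow> nat \<Rightarrow> (nat \<Rightarrow> nat) \<Rightarrow> (nat \<Rightarrow> nat) set" where
  "cyc_grp p k r = {g. (\<forall>i<k. g i < p ^ r i) \<and> (\<forall>i. k \<le> i \<longrightarrow> g i = 0)}"

definition cyc_sub :: "nat \<Rightarrow> (nat \<Rightarrow> nat) \<Rightarrow> (nat \<Rightarrow> nat) \<Rightarrow> (nat \<Rightarrow> nat) \<Rightarrow> (nat \<Rightarrow> nat)" where
  "cyc_sub p r g h = (\<lambda>i. (g i + p ^ r i - h i mod p ^ r i) mod p ^ r i)"

definition conv :: "(nat \<Rightarrow> nat) set \<Rightarrow> ((nat \<Rightarrow> nat) \<Rightarrow> (nat \<Rightarrow> nat) \<Rightarrow> (nat \<Rightarrow> nat))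
    \<Rightarrow> ((nat \<Rightarrow> nat) \<Rightarrow> 'k::field) \<Rightarrow> ((nat \<Rightarrow> nat) \<Rightarrow> 'k) \<Rightarrow> (nat \<Rightarrow> nat) \<Rightarrow> 'k" where
  "conv G sub f a g = (\<Sum>h\<in>G. f h * a (sub g h))"

definition mass :: "(nat \<Rightarrow> nat) set \<Rightarrow> ((nat \<Rightarrow> nat) \<Rightarrow> 'k::field) \<Rightarrow> 'k" where
  "mass G a = (\<Sum>u\<in>G. a u)"

text \<open>Matrix of Delta_a : f |-> f * a on F(G,K) w.r.t. the basis of indicator functions
  delta_{e 0}, ..., delta_{e (n-1)}, where e enumerates G: entry (i,j) is a(e i - e j).\<close>
definition delta_mat :: "(nat \<Rightarrow> (nat \<Rightarrow> nat)) \<Rightarrow> nat \<Rightarrow> ((nat \<Rightarrow> nat) \<Rightarrow> (nat \<Rightarrow> nat) \<Rightarrow> (nat \<Rightarrow> nat))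
    \<Rightarrow> ((nat \<Rightarrow> nat) \<Rightarrow> 'k::field) \<Rightarrow> 'k mat" where
  "delta_mat e n sub a = mat n n (\<lambda>(i, j). a (sub (e i) (e j)))"

end

theory Submission
  imports Defs "HOL-Library.Poly_Mapping" "HOL-Library.Function_Algebras"
    "HOL-Computational_Algebra.Primes" "HOL-Number_Theory.Cong"
begin

(* Convolution on G is the image of the monoid algebra K[N^(N)] of finitely supported exponent
   vectors under the quotient map red : N^(N) -> G; the element A = sum_u a(u) X^u acts on
   F(G,K) (via rep) as Delta_a.  Put q = p^(r_1 + ... + r_k): q kills G, so rep sends every X^(q u)
   to the identity.  In characteristic p the Frobenius map gives
   (A - |a|)^q = sum_u a(u)^q X^(q u) - |a|^q, whose image is (sum_u a(u))^q - |a|^q = 0.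
   Hence N = Delta_a - |a| is nilpotent, and the factorisation
   (sum_i (x - |a|)^(q-1-i) N^i) (x - |a| - N) = (x - |a|)^q shows that the monic polynomial
   det (x - Delta_a) divides a power of x - |a|, so it is (x - |a|)^|G|.  Nonzero a-harmonic
   functions exist iff 0 is a root of it, i.e. iff |a| = 0, and 1 * a is the constant |a|. *)

lemma CHAR_poly_mapping: "CHAR('a::comm_monoid_add \<Rightarrow>\<^sub>0 'c::comm_semiring_1) = CHAR('c)"
proof (rule CHAR_eqI)
  show "of_nat CHAR('c) = (0 :: 'a \<Rightarrow>\<^sub>0 'c)"
    by (rule poly_mapping_eqI) (simp add: lookup_of_nat)
next
  fix m assume "of_nat m = (0 :: 'a \<Rightarrow>\<^sub>0 'c)"
  then have "Poly_Mapping.lookup (of_nat m :: 'a \<Rightarrow>\<^sub>0 'c) 0 = 0" by simp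
  then show "CHAR('c) dvd m"
    by (simp add: lookup_of_nat of_nat_eq_0_iff_char_dvd)
qed

lemma poly_mapping_sum_single:
  "f = (\<Sum>\<alpha>\<in>Poly_Mapping.keys f. Poly_Mapping.single \<alpha> (Poly_Mapping.lookup f \<alpha>))"
  by (rule poly_mapping_eqI) (simp add: lookup_sum lookup_single when_def in_keys_iff)

lemma sum_single_same_key:
  "(\<Sum>u\<in>S. Poly_Mapping.single \<alpha> (c u)) = Poly_Mapping.single \<alpha> (sum c S)"
  by (rule poly_mapping_eqI) (simp add: lookup_sum lookup_single when_def)

lemma lookup_sum_single:
  assumes "finite S"
  shows "Poly_Mapping.lookup (\<Sum>u\<in>S. Poly_Mapping.single u (c u)) \<alpha> = (c \<alpha> when \<alpha> \<in> S)"
  using assms by (simp add: lookup_sum lookup_single when_def)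

lemma poly_mapping_add_single_induct [case_names zero add_single]:
  assumes "P 0" and "\<And>f \<alpha> c. P f \<Longrightarrow> P (f + Poly_Mapping.single \<alpha> c)"
  shows "P f"
proof (induction f rule: update_induct)
  case (update f \<alpha> c)
  have "Poly_Mapping.update \<alpha> c f = f + Poly_Mapping.single \<alpha> c"
    using update.hyps(1)
    by (intro poly_mapping_eqI) (auto simp: lookup_update lookup_add lookup_single in_keys_iff)
  with assms(2)[OF update.IH] show ?case by (simp only:)
qed (fact assms(1))

lemma single_power:
  "Poly_Mapping.single u c ^ m = Poly_Mapping.single (\<lambda>i. m * u i) (c ^ m :: 'c::comm_semiring_1)"
proof (induction m)
  case 0
  have "(\<lambda>i. 0 * u i) = 0" by (simp add: fun_eq_iff)
  then show ?case by simp
next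
  case (Suc m)
  have "u + (\<lambda>i. m * u i) = (\<lambda>i. Suc m * u i)" by (simp add: fun_eq_iff)
  then show ?case using Suc by (simp add: mult_single)
qed

lemma mat_power_diff_factor:
  fixes X :: "'a::comm_ring_1 mat"
  assumes X: "X \<in> carrier_mat n n"
  shows "\<exists>S\<in>carrier_mat n n. S * (y \<cdot>\<^sub>m 1\<^sub>m n - X) = y ^ m \<cdot>\<^sub>m 1\<^sub>m n - X ^\<^sub>m m"
proof (induction m)
  case 0
  have "0\<^sub>m n n * (y \<cdot>\<^sub>m 1\<^sub>m n - X) = y ^ 0 \<cdot>\<^sub>m 1\<^sub>m n - X ^\<^sub>m 0"
    using X by (intro eq_matI) auto
  then show ?case by (intro bexI[of _ "0\<^sub>m n n"]) auto
next
  case (Suc m)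
  then obtain S where S: "S \<in> carrier_mat n n"
    and IH: "S * (y \<cdot>\<^sub>m 1\<^sub>m n - X) = y ^ m \<cdot>\<^sub>m 1\<^sub>m n - X ^\<^sub>m m" by (elim bexE)
  have Xm: "X ^\<^sub>m m \<in> carrier_mat n n" using X by simp
  have L: "y \<cdot>\<^sub>m 1\<^sub>m n - X \<in> carrier_mat n n" using X by (rule minus_carrier_mat)
  have "(y \<cdot>\<^sub>m S + X ^\<^sub>m m) * (y \<cdot>\<^sub>m 1\<^sub>m n - X)
      = y \<cdot>\<^sub>m (S * (y \<cdot>\<^sub>m 1\<^sub>m n - X)) + X ^\<^sub>m m * (y \<cdot>\<^sub>m 1\<^sub>m n - X)"
    using S Xm L by (simp add: add_mult_distrib_mat[of _ n n] mult_smult_assoc_mat[of _ n n])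
  also have "X ^\<^sub>m m * (y \<cdot>\<^sub>m 1\<^sub>m n - X) = y \<cdot>\<^sub>m X ^\<^sub>m m - X ^\<^sub>m Suc m"
    using mult_minus_distrib_mat[OF Xm _ X, of "y \<cdot>\<^sub>m 1\<^sub>m n"]
      mult_smult_distrib[OF Xm one_carrier_mat, of y] right_mult_one_mat[OF Xm] by simp
  also have "y \<cdot>\<^sub>m (S * (y \<cdot>\<^sub>m 1\<^sub>m n - X)) + (y \<cdot>\<^sub>m X ^\<^sub>m m - X ^\<^sub>m Suc m)
      = y ^ Suc m \<cdot>\<^sub>m 1\<^sub>m n - X ^\<^sub>m Suc m"
    unfolding IH using X by (intro eq_matI) (auto simp: right_diff_distrib)
  finally show ?case using S Xm by (intro bexI[of _ "y \<cdot>\<^sub>m S + X ^\<^sub>m m"]) auto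
qed

lemma monic_dvd_linear_power:
  fixes f :: "'a::idom poly"
  assumes "lead_coeff f = 1" and "f dvd [:-c, 1:] ^ N"
  shows "f = [:-c, 1:] ^ degree f"
  using assms
proof (induction N arbitrary: f)
  case 0
  then obtain d where "f = [:d:]"
    by (auto simp: is_unit_poly_iff)
  with "0.prems"(1) show ?case by simp
next
  case (Suc N)
  let ?y = "[:-c, 1:]"
  have y: "?y \<noteq> 0" by simp
  obtain g where "?y ^ Suc N = f * g"
    using Suc.prems(2) by (rule dvdE)
  then have fg: "?y * ?y ^ N = f * g" by simp
  show ?case
  proof (cases "poly f c = 0")
    case True
    then have "?y dvd f" by (simp add: poly_eq_0_iff_dvd)
    then obtain f' where f: "f = ?y * f'" by (rule dvdE)
    have monic: "lead_coeff f' = 1"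
      using Suc.prems(1) unfolding f lead_coeff_mult by simp
    have "?y * ?y ^ N = ?y * (f' * g)"
      using fg by (simp only: f mult.assoc)
    then have "f' dvd ?y ^ N"
      by (simp only: mult_left_cancel[OF y]) simp
    with monic have f': "f' = ?y ^ degree f'"
      by (rule Suc.IH)
    have "?y * f' = ?y ^ Suc (degree f')"
      by (subst (1) f') (simp only: power_Suc)
    then have f_pow: "f = ?y ^ Suc (degree f')"
      by (simp only: f)
    then have "degree f = Suc (degree f')"
      by (simp only: degree_linear_power)
    with f_pow show ?thesis
      by (simp only:)
  next
    case False
    then have "poly g c = 0"
      using arg_cong[OF fg, of "\<lambda>q. poly q c"] by simp
    then have "?y dvd g" by (simp add: poly_eq_0_iff_dvd)
    then obtain g' where g: "g = ?y * g'" by (rule dvdE)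
    have "?y * ?y ^ N = ?y * (f * g')"
      using fg by (simp only: g mult.left_commute[of f])
    then have "f dvd ?y ^ N"
      by (simp only: mult_left_cancel[OF y]) simp
    then show ?thesis
      using Suc.prems(1) by (rule Suc.IH[rotated])
  qed
qed

lemma char_poly_eq_linear_power_if_nilpotent:
  fixes M :: "'a::idom mat"
  assumes M: "M \<in> carrier_mat n n" and nilpotent: "(M - c \<cdot>\<^sub>m 1\<^sub>m n) ^\<^sub>m q = 0\<^sub>m n n"
  shows "char_poly M = [:-c, 1:] ^ n"
proof -
  interpret const_poly: semiring_hom "\<lambda>x::'a. [:x:]"
    by unfold_locales auto
  define y where "y = [:-c, 1:]"
  have N: "M - c \<cdot>\<^sub>m 1\<^sub>m n \<in> carrier_mat n n"
    by (rule minus_carrier_mat) simp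
  define X where "X = map_mat (\<lambda>x. [:x:]) (M - c \<cdot>\<^sub>m 1\<^sub>m n)"
  have X: "X \<in> carrier_mat n n"
    unfolding X_def using N by simp
  have "X ^\<^sub>m q = map_mat (\<lambda>x. [:x:]) ((M - c \<cdot>\<^sub>m 1\<^sub>m n) ^\<^sub>m q)"
    unfolding X_def by (rule const_poly.mat_hom_pow[OF N, symmetric])
  also have "\<dots> = 0\<^sub>m n n"
    unfolding nilpotent by (intro eq_matI) auto
  finally have "X ^\<^sub>m q = 0\<^sub>m n n" .
  moreover have "char_poly_matrix M = y \<cdot>\<^sub>m 1\<^sub>m n - X"
    unfolding X_def y_def char_poly_matrix_def using M by (intro eq_matI) auto
  moreover obtain S where S: "S \<in> carrier_mat n n"
    and "S * (y \<cdot>\<^sub>m 1\<^sub>m n - X) = y ^ q \<cdot>\<^sub>m 1\<^sub>m n - X ^\<^sub>m q"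
    using mat_power_diff_factor[OF X, of y q] by auto
  ultimately have "S * char_poly_matrix M = y ^ q \<cdot>\<^sub>m 1\<^sub>m n - 0\<^sub>m n n"
    by simp
  also have "\<dots> = y ^ q \<cdot>\<^sub>m 1\<^sub>m n"
    by (intro eq_matI) auto
  finally have "S * char_poly_matrix M = y ^ q \<cdot>\<^sub>m 1\<^sub>m n" .
  then have "det S * char_poly M = (y ^ q) ^ n"
    unfolding char_poly_def using det_mult[OF S char_poly_matrix_closed[OF M]] by simp
  then have "char_poly M dvd y ^ (q * n)"
    by (metis dvd_triv_right power_mult)
  moreover have "degree (char_poly M) = n" "lead_coeff (char_poly M) = 1"
    using degree_monic_char_poly[OF M] by simp_all
  ultimately show ?thesis
    unfolding y_def by (metis monic_dvd_linear_power)
qed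

lemma conv_eq_delta_mat_mult_vec:
  assumes e: "bij_betw e {0..<n} G" and i: "i < n"
  shows "conv G sub f a (e i) = (delta_mat e n sub a *\<^sub>v vec n (\<lambda>j. f (e j))) $ i"
proof -
  have "conv G sub f a (e i) = (\<Sum>j\<in>{0..<n}. f (e j) * a (sub (e i) (e j)))"
    unfolding conv_def by (rule sum.reindex_bij_betw[OF e, symmetric])
  also have "\<dots> = (delta_mat e n sub a *\<^sub>v vec n (\<lambda>j. f (e j))) $ i"
    using i by (auto simp: delta_mat_def scalar_prod_def mult.commute intro!: sum.cong)
  finally show ?thesis .
qed

lemma nonzero_harmonic_iff_eigenvalue_zero:
  fixes a :: "(nat \<Rightarrow> nat) \<Rightarrow> 'k::field"
  assumes e: "bij_betw e {0..<n} G"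
  shows "(\<exists>f. (\<exists>g\<in>G. f g \<noteq> 0) \<and> (\<forall>g\<in>G. conv G sub f a g = 0))
    \<longleftrightarrow> eigenvalue (delta_mat e n sub a) 0"
proof -
  let ?M = "delta_mat e n sub a"
  have M: "?M \<in> carrier_mat n n"
    by (simp add: delta_mat_def)
  have harmonic_iff: "(\<forall>g\<in>G. conv G sub f a g = 0) \<longleftrightarrow> ?M *\<^sub>v vec n (\<lambda>j. f (e j)) = 0\<^sub>v n" for f
  proof -
    have "(\<forall>g\<in>G. conv G sub f a g = 0) \<longleftrightarrow> (\<forall>i<n. conv G sub f a (e i) = 0)"
      using e by (auto simp: bij_betw_def)
    also have "\<dots> \<longleftrightarrow> ?M *\<^sub>v vec n (\<lambda>j. f (e j)) = 0\<^sub>v n"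
      using M by (auto simp: conv_eq_delta_mat_mult_vec[OF e] vec_eq_iff)
    finally show ?thesis .
  qed
  have nonzero_iff: "(\<exists>g\<in>G. f g \<noteq> 0) \<longleftrightarrow> vec n (\<lambda>j. f (e j)) \<noteq> 0\<^sub>v n" for f :: "_ \<Rightarrow> 'k"
    using e by (auto simp: bij_betw_def vec_eq_iff)
  have "(\<exists>f. (\<exists>g\<in>G. f g \<noteq> 0) \<and> (\<forall>g\<in>G. conv G sub f a g = 0))
      \<longleftrightarrow> (\<exists>v\<in>carrier_vec n. v \<noteq> 0\<^sub>v n \<and> ?M *\<^sub>v v = 0\<^sub>v n)"
  proof
    assume "\<exists>v\<in>carrier_vec n. v \<noteq> 0\<^sub>v n \<and> ?M *\<^sub>v v = 0\<^sub>v n"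
    then obtain v where v: "v \<in> carrier_vec n" "v \<noteq> 0\<^sub>v n" "?M *\<^sub>v v = 0\<^sub>v n"
      by blast
    define f where "f g = v $ inv_into {0..<n} e g" for g
    have "vec n (\<lambda>j. f (e j)) = v"
      using v(1) e by (auto simp: f_def bij_betw_def vec_eq_iff)
    then show "\<exists>f. (\<exists>g\<in>G. f g \<noteq> 0) \<and> (\<forall>g\<in>G. conv G sub f a g = 0)"
      using v harmonic_iff nonzero_iff by metis
  qed (use harmonic_iff nonzero_iff in auto)
  also have "\<dots> \<longleftrightarrow> eigenvalue ?M 0"
  proof -
    have "0 \<cdot>\<^sub>v v = 0\<^sub>v n" if "v \<in> carrier_vec n" for v :: "'k vec"
      using that by (intro eq_vecI) auto
    then show ?thesis
      using M unfolding eigenvalue_def eigenvector_def by (metis carrier_matD(1))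
  qed
  finally show ?thesis .
qed

lemma mod_diff_eq_mod_iff:
  fixes x y a P :: nat
  assumes "x < P" "y < P"
  shows "(x + P - y) mod P = a mod P \<longleftrightarrow> x = (y + a) mod P"
proof -
  have "(x + P - y) mod P = a mod P \<longleftrightarrow> [x + P - y + y = a + y] (mod P)"
    by (simp add: cong_def[symmetric] cong_add_rcancel_nat)
  also have "x + P - y + y = x + P"
    using assms by simp
  also have "[x + P = a + y] (mod P) \<longleftrightarrow> x = (y + a) mod P"
    using assms by (simp add: cong_def add.commute)
  finally show ?thesis .
qed

locale cyc_grp_params =
  fixes p k :: nat and r :: "nat \<Rightarrow> nat"
  assumes p_pos: "0 < p"
begin

abbreviation G where "G \<equiv> cyc_grp p k r"

definition red :: "(nat \<Rightarrow> nat) \<Rightarrow> nat \<Rightarrow> nat" where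
  "red \<alpha> = (\<lambda>i. if i < k then \<alpha> i mod p ^ r i else 0)"

lemma zero_in_G: "0 \<in> G"
  unfolding cyc_grp_def using p_pos by simp

lemma red_in_G: "red \<alpha> \<in> G"
  unfolding cyc_grp_def red_def using p_pos by simp

lemma red_eq_self: "x \<in> G \<Longrightarrow> red x = x"
  unfolding cyc_grp_def red_def by (auto simp: fun_eq_iff)

lemma red_add_red: "red (red x + y) = red (x + y)"
  unfolding red_def by (auto simp: fun_eq_iff mod_add_left_eq)

lemma red_exponent_multiple: "red (\<lambda>i. p ^ (\<Sum>i<k. r i) * \<alpha> i) = 0"
proof -
  have "p ^ r i dvd p ^ (\<Sum>i<k. r i)" if "i < k" for i
    using that by (intro le_imp_power_dvd member_le_sum) auto
  then show ?thesis
    unfolding red_def by (auto simp: fun_eq_iff)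
qed

lemma cyc_sub_eq_red_iff:
  assumes "x \<in> G" "y \<in> G"
  shows "cyc_sub p r x y = red \<alpha> \<longleftrightarrow> x = red (y + \<alpha>)"
proof -
  have "cyc_sub p r x y i = red \<alpha> i \<longleftrightarrow> x i = red (y + \<alpha>) i" for i
    using assms mod_diff_eq_mod_iff[of "x i" "p ^ r i" "y i"]
    unfolding cyc_grp_def cyc_sub_def red_def by auto
  then show ?thesis
    by (auto simp: fun_eq_iff)
qed

lemma cyc_sub_in_G: "x \<in> G \<Longrightarrow> y \<in> G \<Longrightarrow> cyc_sub p r x y \<in> G"
  unfolding cyc_grp_def cyc_sub_def using p_pos by simp

lemma cyc_sub_cyc_sub:
  assumes "g \<in> G" "h \<in> G"
  shows "cyc_sub p r g (cyc_sub p r g h) = h"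
proof -
  have gh: "cyc_sub p r g h \<in> G"
    using assms by (rule cyc_sub_in_G)
  then have "g = red (h + cyc_sub p r g h)"
    using cyc_sub_eq_red_iff[OF assms] red_eq_self by metis
  then have "cyc_sub p r g (cyc_sub p r g h) = red h"
    using cyc_sub_eq_red_iff[OF assms(1) gh] by (simp add: add.commute)
  then show ?thesis
    using red_eq_self[OF assms(2)] by simp
qed

lemma conv_const_one:
  assumes "g \<in> G"
  shows "conv G (cyc_sub p r) (\<lambda>_. 1) a g = mass G a"
  unfolding conv_def mass_def
  by (rule sum.reindex_bij_witness[of _ "cyc_sub p r g" "cyc_sub p r g"])
    (use assms cyc_sub_cyc_sub cyc_sub_in_G in auto)

end

locale enum_cyc_grp = cyc_grp_params +
  fixes e :: "nat \<Rightarrow> nat \<Rightarrow> nat"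
  assumes e_bij: "bij_betw e {0..<card (cyc_grp p k r)} (cyc_grp p k r)"
begin

abbreviation n where "n \<equiv> card G"

lemma finite_G: "finite G"
proof (rule ccontr)
  assume "infinite G"
  then have "G = {}"
    using e_bij by (simp add: bij_betw_def)
  then show False
    using zero_in_G by simp
qed

lemma n_pos: "0 < n"
  using finite_G zero_in_G card_gt_0_iff by blast

lemma e_in_G: "i < n \<Longrightarrow> e i \<in> G"
  using e_bij by (auto simp: bij_betw_def)

lemma e_eq_iff: "i < n \<Longrightarrow> j < n \<Longrightarrow> e i = e j \<longleftrightarrow> i = j"
  using e_bij by (auto simp: bij_betw_def inj_on_def)

lemma ex_index: "x \<in> G \<Longrightarrow> \<exists>i<n. e i = x"
  using e_bij by (force simp: bij_betw_def)

lemma sum_when_index_eq: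
  assumes "l0 < n"
  shows "(\<Sum>l<n. F l when e l = e l0) = F l0"
proof -
  have "(\<Sum>l<n. F l when e l = e l0) = (\<Sum>l<n. F l when l = l0)"
    using assms by (intro sum.cong) (auto simp: e_eq_iff)
  also have "\<dots> = F l0"
    using assms by (simp add: when_def)
  finally show ?thesis .
qed

definition rep :: "((nat \<Rightarrow> nat) \<Rightarrow>\<^sub>0 'c::comm_ring_1) \<Rightarrow> 'c mat" where
  "rep f = mat n n (\<lambda>(i, j). \<Sum>\<alpha>. Poly_Mapping.lookup f \<alpha> when e i = red (e j + \<alpha>))"

lemma rep_carrier [simp]: "rep f \<in> carrier_mat n n"
  and rep_dim [simp]: "dim_row (rep f) = n" "dim_col (rep f) = n"
  unfolding rep_def by simp_all

lemma rep_entry: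
  assumes "finite S" "Poly_Mapping.keys f \<subseteq> S" "i < n" "j < n"
  shows "rep f $$ (i, j) = (\<Sum>\<alpha>\<in>S. Poly_Mapping.lookup f \<alpha> when e i = red (e j + \<alpha>))"
  unfolding rep_def using assms
  by (simp add: Sum_any.expand_superset[of S] subset_iff in_keys_iff)

lemma rep_add: "rep (f + g) = rep f + rep g"
proof (rule eq_matI)
  fix i j assume "i < dim_row (rep f + rep g)" "j < dim_col (rep f + rep g)"
  then have ij: "i < n" "j < n" by simp_all
  let ?S = "Poly_Mapping.keys f \<union> Poly_Mapping.keys g"
  have "finite ?S" "Poly_Mapping.keys (f + g) \<subseteq> ?S"
    by (simp_all add: keys_add)
  then show "rep (f + g) $$ (i, j) = (rep f + rep g) $$ (i, j)"
    using ij by (simp add: rep_entry[of ?S] lookup_add when_add_distrib sum.distrib)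
qed simp_all

lemma rep_diff: "rep (f - g) = rep f - rep g"
proof (rule eq_matI)
  fix i j assume "i < dim_row (rep f - rep g)" "j < dim_col (rep f - rep g)"
  then have ij: "i < n" "j < n" by simp_all
  let ?S = "Poly_Mapping.keys f \<union> Poly_Mapping.keys g"
  have "finite ?S" "Poly_Mapping.keys (f - g) \<subseteq> ?S"
    by (simp_all add: keys_diff)
  then show "rep (f - g) $$ (i, j) = (rep f - rep g) $$ (i, j)"
    using ij by (simp add: rep_entry[of ?S] lookup_minus when_diff_distrib sum_subtractf)
qed simp_all

lemma rep_zero: "rep 0 = 0\<^sub>m n n"
  by (intro eq_matI) (simp_all add: rep_def)

lemma rep_single_entry:
  "i < n \<Longrightarrow> j < n \<Longrightarrow> rep (Poly_Mapping.single \<alpha> c) $$ (i, j) = (c when e i = red (e j + \<alpha>))"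
  by (simp add: rep_entry[of "{\<alpha>}"])

lemma rep_single_red: "rep (Poly_Mapping.single \<alpha> c) = rep (Poly_Mapping.single (red \<alpha>) c)"
  using red_add_red[of \<alpha>] by (intro eq_matI) (simp_all add: rep_single_entry add.commute)

lemma rep_single_zero: "rep (Poly_Mapping.single 0 c) = c \<cdot>\<^sub>m 1\<^sub>m n"
  by (intro eq_matI) (simp_all add: rep_single_entry red_eq_self e_in_G e_eq_iff)

lemma rep_one: "rep 1 = 1\<^sub>m n"
proof -
  have "rep 1 = 1 \<cdot>\<^sub>m 1\<^sub>m n"
    using rep_single_zero[of 1] by simp
  also have "\<dots> = 1\<^sub>m n"
    by (intro eq_matI) simp_all
  finally show ?thesis .
qed

lemma rep_single_mult:
  "rep (Poly_Mapping.single \<alpha> c * Poly_Mapping.single \<beta> d)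
     = rep (Poly_Mapping.single \<alpha> c) * rep (Poly_Mapping.single \<beta> d)"
proof (rule eq_matI)
  fix i j assume "i < dim_row (rep (Poly_Mapping.single \<alpha> c) * rep (Poly_Mapping.single \<beta> d))"
    and "j < dim_col (rep (Poly_Mapping.single \<alpha> c) * rep (Poly_Mapping.single \<beta> d))"
  then have ij: "i < n" "j < n" by simp_all
  obtain l0 where l0: "l0 < n" "e l0 = red (e j + \<beta>)"
    using ex_index[OF red_in_G] by blast
  have "(rep (Poly_Mapping.single \<alpha> c) * rep (Poly_Mapping.single \<beta> d)) $$ (i, j)
      = (\<Sum>l<n. (c when e i = red (e l + \<alpha>)) * d when e l = e l0)"
    using ij l0 by (simp add: scalar_prod_def rep_single_entry lessThan_atLeast0 mult_when)
  also have "\<dots> = (c when e i = red (e l0 + \<alpha>)) * d"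
    by (rule sum_when_index_eq[OF l0(1)])
  also have "red (e l0 + \<alpha>) = red (e j + (\<alpha> + \<beta>))"
    using red_add_red[of "e j + \<beta>" \<alpha>] by (simp add: l0(2) ac_simps)
  also have "(c when e i = red (e j + (\<alpha> + \<beta>))) * d = (c * d when e i = red (e j + (\<alpha> + \<beta>)))"
    by (simp add: when_mult)
  also have "\<dots> = rep (Poly_Mapping.single \<alpha> c * Poly_Mapping.single \<beta> d) $$ (i, j)"
    using ij by (simp add: mult_single rep_single_entry)
  finally show "rep (Poly_Mapping.single \<alpha> c * Poly_Mapping.single \<beta> d) $$ (i, j)
      = (rep (Poly_Mapping.single \<alpha> c) * rep (Poly_Mapping.single \<beta> d)) $$ (i, j)" ..
qed simp_all

lemma rep_mult: "rep (f * g) = rep f * rep g"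
proof (induction f rule: poly_mapping_add_single_induct)
  case zero
  then show ?case by (simp add: rep_zero)
next
  case (add_single f \<alpha> c)
  have "rep (Poly_Mapping.single \<alpha> c * g) = rep (Poly_Mapping.single \<alpha> c) * rep g"
  proof (induction g rule: poly_mapping_add_single_induct)
    case zero
    then show ?case by (simp add: rep_zero)
  next
    case (add_single g \<beta> d)
    then show ?case
      by (simp add: distrib_left rep_add rep_single_mult
          mult_add_distrib_mat[OF rep_carrier rep_carrier rep_carrier])
  qed
  with add_single show ?case
    by (simp add: distrib_right rep_add add_mult_distrib_mat[OF rep_carrier rep_carrier rep_carrier])
qed

lemma rep_power: "rep (f ^ m) = rep f ^\<^sub>m m"
proof (induction m)
  case (Suc m)
  have "rep (f ^ Suc m) = rep (f ^ m * f)"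
    by (simp only: power_Suc2)
  then show ?case
    by (simp add: rep_mult Suc.IH)
qed (simp add: rep_one)

lemma rep_sum_cong:
  assumes "\<And>u. u \<in> S \<Longrightarrow> rep (F u) = rep (F' u)"
  shows "rep (sum F S) = rep (sum F' S)"
  using assms by (induction S rule: infinite_finite_induct) (simp_all add: rep_add)

lemma rep_augmentation_nilpotent:
  fixes f :: "(nat \<Rightarrow> nat) \<Rightarrow>\<^sub>0 'c::comm_ring_1"
  assumes "prime p" and "CHAR('c) = p"
  shows "rep ((f - Poly_Mapping.single 0 (\<Sum>\<alpha>\<in>Poly_Mapping.keys f. Poly_Mapping.lookup f \<alpha>))
    ^ p ^ (\<Sum>i<k. r i)) = 0\<^sub>m n n"
proof -
  define q where "q = p ^ (\<Sum>i<k. r i)"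
  define C where "C = Poly_Mapping.single (0 :: nat \<Rightarrow> nat) (\<Sum>\<alpha>\<in>Poly_Mapping.keys f. Poly_Mapping.lookup f \<alpha>)"
  have char_coeff: "prime CHAR('c)" "q = CHAR('c) ^ (\<Sum>i<k. r i)"
    using assms by (simp_all add: q_def)
  have char_alg: "prime CHAR((nat \<Rightarrow> nat) \<Rightarrow>\<^sub>0 'c)" "q = CHAR((nat \<Rightarrow> nat) \<Rightarrow>\<^sub>0 'c) ^ (\<Sum>i<k. r i)"
    using char_coeff by (simp_all add: CHAR_poly_mapping)
  have "(f - C + C) ^ q = (f - C) ^ q + C ^ q"
    by (rule freshmans_dream'[OF char_alg])
  then have frobenius: "(f - C) ^ q = f ^ q - C ^ q"
    by (simp add: algebra_simps)
  have "f ^ q = (\<Sum>\<alpha>\<in>Poly_Mapping.keys f. Poly_Mapping.single \<alpha> (Poly_Mapping.lookup f \<alpha>)) ^ q"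
    by (simp only: poly_mapping_sum_single[symmetric])
  also have "\<dots> = (\<Sum>\<alpha>\<in>Poly_Mapping.keys f. Poly_Mapping.single (\<lambda>i. q * \<alpha> i) (Poly_Mapping.lookup f \<alpha> ^ q))"
    by (simp add: freshmans_dream_sum'[OF char_alg] single_power)
  finally have "rep (f ^ q) = rep (\<Sum>\<alpha>\<in>Poly_Mapping.keys f. Poly_Mapping.single (\<lambda>i. q * \<alpha> i) (Poly_Mapping.lookup f \<alpha> ^ q))"
    by simp
  also have "\<dots> = rep (\<Sum>\<alpha>\<in>Poly_Mapping.keys f. Poly_Mapping.single 0 (Poly_Mapping.lookup f \<alpha> ^ q))"
    by (intro rep_sum_cong) (subst rep_single_red, simp add: q_def red_exponent_multiple)
  also have "\<dots> = rep (C ^ q)"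
    by (simp add: C_def sum_single_same_key single_power freshmans_dream_sum'[OF char_coeff] zero_fun_def)
  finally show ?thesis
    using frobenius by (simp add: q_def C_def rep_diff)
qed

lemma rep_sum_single_G: "rep (\<Sum>u\<in>G. Poly_Mapping.single u (a u)) = delta_mat e n (cyc_sub p r) a"
proof (rule eq_matI)
  fix i j assume "i < dim_row (delta_mat e n (cyc_sub p r) a)" "j < dim_col (delta_mat e n (cyc_sub p r) a)"
  then have ij: "i < n" "j < n"
    by (simp_all add: delta_mat_def)
  let ?f = "\<Sum>u\<in>G. Poly_Mapping.single u (a u)"
  let ?d = "cyc_sub p r (e i) (e j)"
  have "Poly_Mapping.keys ?f \<subseteq> G"
    by (auto simp: in_keys_iff lookup_sum_single[OF finite_G])
  then have "rep ?f $$ (i, j) = (\<Sum>\<alpha>\<in>G. Poly_Mapping.lookup ?f \<alpha> when e i = red (e j + \<alpha>))"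
    using ij by (intro rep_entry finite_G)
  also have "\<dots> = (\<Sum>\<alpha>\<in>G. a \<alpha> when \<alpha> = ?d)"
  proof (rule sum.cong)
    fix \<alpha> assume "\<alpha> \<in> G"
    then have "e i = red (e j + \<alpha>) \<longleftrightarrow> \<alpha> = ?d"
      using cyc_sub_eq_red_iff[OF e_in_G e_in_G] ij red_eq_self by metis
    with \<open>\<alpha> \<in> G\<close> show "(Poly_Mapping.lookup ?f \<alpha> when e i = red (e j + \<alpha>)) = (a \<alpha> when \<alpha> = ?d)"
      by (simp add: lookup_sum_single[OF finite_G])
  qed simp
  also have "\<dots> = delta_mat e n (cyc_sub p r) a $$ (i, j)"
    using ij cyc_sub_in_G[OF e_in_G e_in_G] finite_G by (simp add: delta_mat_def when_def)
  finally show "rep ?f $$ (i, j) = delta_mat e n (cyc_sub p r) a $$ (i, j)" .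
qed (simp_all add: delta_mat_def)

lemma delta_mat_minus_mass_nilpotent:
  fixes a :: "(nat \<Rightarrow> nat) \<Rightarrow> 'k::field"
  assumes "prime p" and "CHAR('k) = p"
  shows "(delta_mat e n (cyc_sub p r) a - mass G a \<cdot>\<^sub>m 1\<^sub>m n) ^\<^sub>m p ^ (\<Sum>i<k. r i) = 0\<^sub>m n n"
proof -
  define f where "f = (\<Sum>u\<in>G. Poly_Mapping.single u (a u))"
  have keys: "Poly_Mapping.keys f \<subseteq> G"
    by (auto simp: f_def in_keys_iff lookup_sum_single[OF finite_G])
  have "(\<Sum>\<alpha>\<in>Poly_Mapping.keys f. Poly_Mapping.lookup f \<alpha>) = (\<Sum>\<alpha>\<in>G. Poly_Mapping.lookup f \<alpha>)"
    using keys finite_G by (intro sum.mono_neutral_left) (auto simp: in_keys_iff)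
  also have "\<dots> = mass G a"
    by (simp add: f_def mass_def lookup_sum_single[OF finite_G])
  finally have "rep (f - Poly_Mapping.single 0 (\<Sum>\<alpha>\<in>Poly_Mapping.keys f. Poly_Mapping.lookup f \<alpha>))
      = delta_mat e n (cyc_sub p r) a - mass G a \<cdot>\<^sub>m 1\<^sub>m n"
    by (simp add: rep_diff f_def rep_sum_single_G rep_single_zero)
  with rep_augmentation_nilpotent[OF assms, of f] show ?thesis
    by (simp add: rep_power)
qed

end

theorem corollary1p3:
  fixes p k :: nat and r :: "nat \<Rightarrow> nat" and a :: "(nat \<Rightarrow> nat) \<Rightarrow> 'k::field"
    and e :: "nat \<Rightarrow> (nat \<Rightarrow> nat)"
  assumes "prime p" and "CHAR('k) = p"
    and "bij_betw e {0..<card (cyc_grp p k r)} (cyc_grp p k r)"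
  shows "char_poly (delta_mat e (card (cyc_grp p k r)) (cyc_sub p r) a)
           = [:- mass (cyc_grp p k r) a, 1:] ^ card (cyc_grp p k r)
         \<and> ((\<exists>f. (\<exists>g\<in>cyc_grp p k r. f g \<noteq> 0) \<and>
              (\<forall>g\<in>cyc_grp p k r. conv (cyc_grp p k r) (cyc_sub p r) f a g = 0))
          \<longleftrightarrow> (\<forall>g\<in>cyc_grp p k r. conv (cyc_grp p k r) (cyc_sub p r) (\<lambda>_. 1) a g = 0))
         \<and> ((\<forall>g\<in>cyc_grp p k r. conv (cyc_grp p k r) (cyc_sub p r) (\<lambda>_. 1) a g = 0)
          \<longleftrightarrow> mass (cyc_grp p k r) a = 0)"
proof -
  interpret enum_cyc_grp p k r e
    using assms(1,3) by unfold_locales (simp_all add: prime_gt_0_nat)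
  let ?M = "delta_mat e n (cyc_sub p r) a"
  have M: "?M \<in> carrier_mat n n"
    by (simp add: delta_mat_def)
  have char_poly: "char_poly ?M = [:- mass G a, 1:] ^ n"
    by (rule char_poly_eq_linear_power_if_nilpotent[OF M delta_mat_minus_mass_nilpotent[OF assms(1,2)]])
  have "(\<exists>f. (\<exists>g\<in>G. f g \<noteq> 0) \<and> (\<forall>g\<in>G. conv G (cyc_sub p r) f a g = 0))
      \<longleftrightarrow> eigenvalue ?M 0"
    by (rule nonzero_harmonic_iff_eigenvalue_zero[OF e_bij])
  also have "\<dots> \<longleftrightarrow> poly (char_poly ?M) 0 = 0"
    by (rule eigenvalue_root_char_poly[OF M])
  also have "\<dots> \<longleftrightarrow> mass G a = 0"
    using n_pos by (simp add: char_poly)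
  finally have harmonic: "(\<exists>f. (\<exists>g\<in>G. f g \<noteq> 0) \<and> (\<forall>g\<in>G. conv G (cyc_sub p r) f a g = 0))
      \<longleftrightarrow> mass G a = 0" .
  have "conv G (cyc_sub p r) (\<lambda>_. 1) a g = mass G a" if "g \<in> G" for g
    using that by (rule conv_const_one)
  then have "(\<forall>g\<in>G. conv G (cyc_sub p r) (\<lambda>_. 1) a g = 0) \<longleftrightarrow> mass G a = 0"
    using zero_in_G by auto
  with char_poly harmonic show ?thesis
    by simp
qed

end
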